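(* Let $R$ be the final object of $\mathrm{Coalg}(\mathbf{Sgp},\mathbf{Sgp})$, with underlying semigroup $\langle x_{00},x_{11},p_i,q_i\ (i\in\omega)\mid x_{00}^2=x_{00},\ x_{11}^2=x_{11},\ x_{00}p_i=p_i=p_ix_{11},\ x_{11}q_i=q_i=q_ix_{00}\rangle$. Let $S$ be an object of $\mathrm{Coalg}(\mathbf{Sgp},\mathbf{Sgp})$ such that the unique morphism $S\to R$ sends every element of $|S|$ to $x_{00}$. Then $S$ is isomorphic to a cosemigroup obtained from a semigroup $B$ and an idempotent endomorphism $\varepsilon:B\to B$ by taking $|S|=B$ and $\beta^S(b)=\varepsilon(b)^{(0)}$ for $b\in B$ (i.e. $\beta^S=q_0\circ\varepsilon$ with $q_0:B\to B\amalg B$ the first coprojection). The corresponding representable functor sends a semigroup $A$ to the set of homomorphisms $h:B\to A$ with multiplication $h\cdot h'=h\circ\varepsilon$.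
   Context: $\mathbf{Sgp}$ is the variety of semigroups. A cosemigroup in $\mathbf{Sgp}$ is a semigroup $|S|$ with a homomorphism $\beta^S:|S|\to|S|\amalg|S|$ into the free product of two copies of itself such that, for every semigroup $A$, $\mathrm{Hom}(|S|,A)$ with multiplication $g\cdot h=(g\vee h)\circ\beta^S$ (where $g\vee h$ restricts to $g,h$ on the two copies) is a semigroup. For $u\in|S|$, $u^{(0)}$ and $u^{(1)}$ denote its images under the two coprojections $|S|\to|S|\amalg|S|$. $\mathrm{Coalg}(\mathbf{Sgp},\mathbf{Sgp})$ is the category of cosemigroups with morphisms the homomorphisms $f$ with $(f\amalg f)\circ\beta^S=\beta^{S'}\circ f$; it has a final object $R$ with underlying semigroup as displayed (its co-operation being $\beta^R(x_{00})=x_{00}^{(0)}$, $\beta^R(x_{11})=x_{11}^{(1)}$, $\beta^R(p_i)=p_i^{(0)}(x_{00}^{(1)}x_{11}^{(0)})^ip_i^{(1)}$, $\beta^R(q_i)=q_i^{(1)}(x_{11}^{(0)}x_{00}^{(1)})^iq_i^{(0)}$). *)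

theory Defs
  imports "HOL-Algebra.Group"
begin

section \<open>Semigroups (carrier + binary operation; the one field is ignored)\<close>

definition is_semigroup :: "('a, 'b) monoid_scheme \<Rightarrow> bool" where
  "is_semigroup G \<longleftrightarrow>
     (\<forall>x\<in>carrier G. \<forall>y\<in>carrier G. x \<otimes>\<^bsub>G\<^esub> y \<in> carrier G) \<and>
     (\<forall>x\<in>carrier G. \<forall>y\<in>carrier G. \<forall>z\<in>carrier G.
        (x \<otimes>\<^bsub>G\<^esub> y) \<otimes>\<^bsub>G\<^esub> z = x \<otimes>\<^bsub>G\<^esub> (y \<otimes>\<^bsub>G\<^esub> z))"

section \<open>Free product (coproduct in Sgp) of copies of G indexed by 'i, as reduced words\<close>

text \<open>The letter (i, a) is the image of a under the i-th coprojection.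
  For binary free products we use tags bool: False = copy 0, True = copy 1.\<close>

definition fp_carrier :: "('a, 'b) monoid_scheme \<Rightarrow> ('i \<times> 'a) list set" where
  "fp_carrier G = {w. w \<noteq> [] \<and> (\<forall>x\<in>set w. snd x \<in> carrier G) \<and>
      (\<forall>k. Suc k < length w \<longrightarrow> fst (w ! k) \<noteq> fst (w ! Suc k))}"

definition fp_mult :: "('a, 'b) monoid_scheme \<Rightarrow> ('i \<times> 'a) list \<Rightarrow> ('i \<times> 'a) list \<Rightarrow> ('i \<times> 'a) list" where
  "fp_mult G w v =
     (if w = [] then v else if v = [] then w
      else if fst (last w) = fst (hd v)
        then butlast w @ [(fst (hd v), snd (last w) \<otimes>\<^bsub>G\<^esub> snd (hd v))] @ tl v
        else w @ v)"

definition fp :: "('a, 'b) monoid_scheme \<Rightarrow> ('i \<times> 'a) list monoid" where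
  "fp G = \<lparr>carrier = fp_carrier G, mult = fp_mult G, one = undefined\<rparr>"

text \<open>Copairing: the homomorphism out of the free product determined by the maps F i on the
  i-th copy, evaluated on a word.\<close>

fun fp_eval :: "('c, 'd) monoid_scheme \<Rightarrow> ('i \<Rightarrow> 'a \<Rightarrow> 'c) \<Rightarrow> ('i \<times> 'a) list \<Rightarrow> 'c" where
  "fp_eval A F [] = undefined"
| "fp_eval A F [x] = F (fst x) (snd x)"
| "fp_eval A F (x # y # ys) = F (fst x) (snd x) \<otimes>\<^bsub>A\<^esub> fp_eval A F (y # ys)"

definition copair :: "('c, 'd) monoid_scheme \<Rightarrow> ('a \<Rightarrow> 'c) \<Rightarrow> ('a \<Rightarrow> 'c) \<Rightarrow> (bool \<times> 'a) list \<Rightarrow> 'c" where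
  "copair A g h = fp_eval A (\<lambda>i. if i then h else g)"

text \<open>Induced multiplication on Hom(|S|, A): g \<cdot> h = (g \<or> h) \<circ> \<beta>.\<close>
definition hmul :: "('c, 'd) monoid_scheme \<Rightarrow> ('a \<Rightarrow> (bool \<times> 'a) list) \<Rightarrow> ('a \<Rightarrow> 'c) \<Rightarrow> ('a \<Rightarrow> 'c) \<Rightarrow> 'a \<Rightarrow> 'c" where
  "hmul A \<beta> g h = (\<lambda>x. copair A g h (\<beta> x))"

text \<open>The test semigroups A range over all semigroups whose carrier lives in the type
  (nat \<times> 'a) list; this type contains the free product of (countably many, in particular three)
  copies of S, which is the universal test object, so this is equivalent to quantifying over all
  semigroups.\<close>

definition cosemigroup :: "'a monoid \<Rightarrow> ('a \<Rightarrow> (bool \<times> 'a) list) \<Rightarrow> bool" where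
  "cosemigroup S \<beta> \<longleftrightarrow> is_semigroup S \<and> \<beta> \<in> hom S (fp S) \<and>
     (\<forall>A :: (nat \<times> 'a) list monoid. is_semigroup A \<longrightarrow>
        (\<forall>g\<in>hom S A. \<forall>h\<in>hom S A. \<forall>k\<in>hom S A. \<forall>x\<in>carrier S.
           hmul A \<beta> (hmul A \<beta> g h) k x = hmul A \<beta> g (hmul A \<beta> h k) x))"

text \<open>Morphisms of cosemigroups: homomorphisms f with (f \<amalg> f) \<circ> \<beta> = \<beta>' \<circ> f, where f \<amalg> f is the
  copairing of (coprojection_i \<circ> f).\<close>

definition cosg_morph :: "'a monoid \<Rightarrow> ('a \<Rightarrow> (bool \<times> 'a) list) \<Rightarrow> 'b monoid \<Rightarrow> ('b \<Rightarrow> (bool \<times> 'b) list) \<Rightarrow> ('a \<Rightarrow> 'b) \<Rightarrow> bool" where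
  "cosg_morph S \<beta> S' \<beta>' f \<longleftrightarrow> f \<in> hom S S' \<and>
     (\<forall>x\<in>carrier S. fp_eval (fp S' :: (bool \<times> 'b) list monoid) (\<lambda>i a. [(i, f a)]) (\<beta> x) = \<beta>' (f x))"

definition cosg_iso :: "'a monoid \<Rightarrow> ('a \<Rightarrow> (bool \<times> 'a) list) \<Rightarrow> 'b monoid \<Rightarrow> ('b \<Rightarrow> (bool \<times> 'b) list) \<Rightarrow> bool" where
  "cosg_iso S \<beta> S' \<beta>' \<longleftrightarrow> (\<exists>f g. cosg_morph S \<beta> S' \<beta>' f \<and> cosg_morph S' \<beta>' S \<beta> g \<and>
     (\<forall>x\<in>carrier S. g (f x) = x) \<and> (\<forall>y\<in>carrier S'. f (g y) = y))"

section \<open>The final cosemigroup R\<close>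

datatype rgen = X00 | X11 | P nat | Q nat

inductive rrel :: "rgen list \<Rightarrow> rgen list \<Rightarrow> bool" where
  "rrel [X00, X00] [X00]"
| "rrel [X11, X11] [X11]"
| "rrel [X00, P i] [P i]"
| "rrel [P i, X11] [P i]"
| "rrel [X11, Q i] [Q i]"
| "rrel [Q i, X00] [Q i]"

inductive rcong :: "rgen list \<Rightarrow> rgen list \<Rightarrow> bool" where
  rc_base: "rrel u v \<Longrightarrow> rcong (x @ u @ y) (x @ v @ y)"
| rc_refl: "rcong w w"
| rc_sym: "rcong u v \<Longrightarrow> rcong v u"
| rc_trans: "rcong u v \<Longrightarrow> rcong v w \<Longrightarrow> rcong u w"

definition R_class :: "rgen list \<Rightarrow> rgen list set" where
  "R_class w = {v. rcong w v}"

definition R_sgp :: "rgen list set monoid" where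
  "R_sgp = \<lparr>carrier = {R_class w | w. w \<noteq> []},
            mult = (\<lambda>C D. {w. \<exists>c\<in>C. \<exists>d\<in>D. rcong (c @ d) w}),
            one = undefined\<rparr>"

fun fp_pow :: "('a, 'b) monoid_scheme \<Rightarrow> ('i \<times> 'a) list \<Rightarrow> nat \<Rightarrow> ('i \<times> 'a) list" where
  "fp_pow G w 0 = []"
| "fp_pow G w (Suc n) = fp_mult G w (fp_pow G w n)"

text \<open>Images of the generators under \<beta>^R (False = superscript (0), True = superscript (1));
  the empty word [] acts as a formal identity for fp_mult, used for the power 0.\<close>
fun R_beta_gen :: "rgen \<Rightarrow> (bool \<times> rgen list set) list" where
  "R_beta_gen X00 = [(False, R_class [X00])]"
| "R_beta_gen X11 = [(True, R_class [X11])]"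
| "R_beta_gen (P i) =
     fp_mult R_sgp (fp_mult R_sgp [(False, R_class [P i])]
        (fp_pow R_sgp (fp_mult R_sgp [(True, R_class [X00])] [(False, R_class [X11])]) i))
      [(True, R_class [P i])]"
| "R_beta_gen (Q i) =
     fp_mult R_sgp (fp_mult R_sgp [(True, R_class [Q i])]
        (fp_pow R_sgp (fp_mult R_sgp [(False, R_class [X11])] [(True, R_class [X00])]) i))
      [(False, R_class [Q i])]"

definition R_beta :: "rgen list set \<Rightarrow> (bool \<times> rgen list set) list" where
  "R_beta C = fp_eval (fp R_sgp :: (bool \<times> rgen list set) list monoid)
                 (\<lambda>_ g. R_beta_gen g) (map (\<lambda>g. (False, g)) (SOME w. w \<noteq> [] \<and> C = R_class w))"

end

theory Submission
  imports Defs
begin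

(* Let f : S \<rightarrow> R be the morphism that is constantly x00.  In R the
   co-operation sends x00 to the single letter x00^(0), because the only words
   congruent to x00 are powers of x00.  Since the copairing of the letter maps
   (i, a) \<mapsto> (i, f a) acts letterwise on reduced words, the morphism condition
   (f \<amalg> f) \<circ> \<beta> = \<beta>^R \<circ> f forces every \<beta>(x) to be a single letter \<epsilon>(x)^(0).
   Multiplicativity of \<beta> then makes \<epsilon> an endomorphism, and coassociativity,
   tested against the copy of S itself, makes \<epsilon> idempotent.  Conversely every
   idempotent endomorphism \<epsilon> gives a cosemigroup b \<mapsto> \<epsilon>(b)^(0) whose induced
   multiplication is h \<cdot> h' = h \<circ> \<epsilon>, and two co-operations that agree on the
   carrier are isomorphic via the identity. *)

lemma rrel_X00_words: "rrel u v \<Longrightarrow> (set u \<subseteq> {X00}) = (set v \<subseteq> {X00})"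
  by (induction rule: rrel.induct) auto

lemma rcong_X00_words: "rcong u v \<Longrightarrow> (set u \<subseteq> {X00}) = (set v \<subseteq> {X00})"
proof (induction rule: rcong.induct)
  case (rc_base u v x y)
  then show ?case using rrel_X00_words[OF rc_base] by auto
qed auto

lemma fp_eval_copy0_letters:
  assumes "w \<noteq> []" and "\<forall>z\<in>set w. \<exists>a. F (fst z) (snd z) = [(False, a)]"
  shows "\<exists>a. fp_eval (fp G) F w = [(False, a)]"
  using assms
proof (induction w rule: induct_list012)
  case (3 x y ys)
  then obtain a b where "F (fst x) (snd x) = [(False, a)]" "fp_eval (fp G) F (y # ys) = [(False, b)]"
    by auto
  then show ?case by (auto simp: fp_def fp_mult_def)
qed auto

lemma R_beta_X00: "\<exists>a. R_beta (R_class [X00]) = [(False, a)]"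
proof -
  define w where "w = (SOME w. w \<noteq> [] \<and> R_class [X00] = R_class w)"
  have "\<exists>w. w \<noteq> [] \<and> R_class [X00] = R_class w" by blast
  then have w: "w \<noteq> [] \<and> R_class [X00] = R_class w" unfolding w_def by (rule someI_ex)
  then have "rcong [X00] w" by (auto simp: R_class_def intro: rc_refl)
  then have "set w \<subseteq> {X00}" using rcong_X00_words by fastforce
  then have "\<exists>a. fp_eval (fp R_sgp :: (bool \<times> rgen list set) list monoid)
                 (\<lambda>_ g. R_beta_gen g) (map (\<lambda>g. (False, g)) w) = [(False, a)]"
    using w by (intro fp_eval_copy0_letters) auto
  then show ?thesis unfolding R_beta_def w_def .
qed

definition alternating :: "('i \<times> 'a) list \<Rightarrow> bool" where
  "alternating w \<longleftrightarrow> (\<forall>k. Suc k < length w \<longrightarrow> fst (w ! k) \<noteq> fst (w ! Suc k))"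

lemma alternating_ConsD:
  "alternating (x # y # ys) \<Longrightarrow> alternating (y # ys) \<and> fst x \<noteq> fst y"
  unfolding alternating_def
  by (metis Suc_less_eq length_Cons nth_Cons_Suc nth_Cons_0 zero_less_Suc)

text \<open>On a reduced word, the copairing of the letter maps (i, a) \<mapsto> (i, c a) simply
  applies c letterwise: no two adjacent letters share a copy, so nothing merges.\<close>

lemma fp_eval_letterwise:
  assumes "alternating w" and "w \<noteq> []"
  shows "fp_eval (fp G) (\<lambda>i a. [(i, c a)]) w = map (\<lambda>(i, a). (i, c a)) w"
  using assms
proof (induction w rule: induct_list012)
  case (2 x)
  then show ?case by (cases x) auto
next
  case (3 x y ys)
  from alternating_ConsD[OF "3.prems"(1)] have tl: "alternating (y # ys)" and tags: "fst x \<noteq> fst y"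
    by auto
  have "fp_eval (fp G) (\<lambda>i a. [(i, c a)]) (x # y # ys)
      = fp_mult G [(fst x, c (snd x))] (map (\<lambda>(i, a). (i, c a)) (y # ys))"
    using "3.IH"(2)[OF tl] by (simp add: fp_def)
  also have "\<dots> = map (\<lambda>(i, a). (i, c a)) (x # y # ys)"
    using tags by (cases x, cases y) (auto simp: fp_mult_def)
  finally show ?case .
qed auto

lemma fp_carrier_alternating: "w \<in> fp_carrier G \<Longrightarrow> alternating w \<and> w \<noteq> []"
  by (simp add: fp_carrier_def alternating_def)

lemma single_letter_over_X00:
  assumes beta: "\<beta> \<in> hom S (fp S)"
    and f: "cosg_morph S \<beta> R_sgp R_beta f" "\<forall>x\<in>carrier S. f x = R_class [X00]"
    and x: "x \<in> carrier S"
  shows "\<exists>a\<in>carrier S. \<beta> x = [(False, a)]"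
proof -
  have word: "\<beta> x \<in> fp_carrier S" using beta x by (auto simp: hom_def fp_def)
  have "map (\<lambda>(i, a). (i, f a)) (\<beta> x)
      = fp_eval (fp R_sgp :: (bool \<times> rgen list set) list monoid) (\<lambda>i a. [(i, f a)]) (\<beta> x)"
    using fp_eval_letterwise fp_carrier_alternating[OF word] by metis
  also have "\<dots> = R_beta (R_class [X00])"
    using f x by (auto simp: cosg_morph_def)
  finally obtain a where "map (\<lambda>(i, a). (i, f a)) (\<beta> x) = [(False, a)]"
    using R_beta_X00 by metis
  then obtain z where "\<beta> x = [z]" "fst z = False" by (cases "\<beta> x") auto
  moreover have "snd z \<in> carrier S" using word \<open>\<beta> x = [z]\<close> by (simp add: fp_carrier_def)
  ultimately show ?thesis by (cases z) auto
qed

lemma hmul_copy0: "hmul A (\<lambda>b. [(False, \<epsilon> b)]) h h' x = h (\<epsilon> x)"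
  by (simp add: hmul_def copair_def)

lemma hmul_single_letter:
  "\<beta> x = [(False, \<epsilon> x)] \<Longrightarrow> hmul A \<beta> h h' x = h (\<epsilon> x)"
  by (simp add: hmul_def copair_def)

lemma copy0_hom_iff:
  "(\<lambda>b. [(False, \<epsilon> b)]) \<in> hom S (fp S) \<longleftrightarrow> \<epsilon> \<in> hom S S"
  by (auto simp: hom_def fp_def fp_carrier_def fp_mult_def Pi_def)

lemma hom_agree:
  assumes "is_semigroup S" "f \<in> hom S T" "\<forall>x\<in>carrier S. g x = f x"
  shows "g \<in> hom S T"
  using assms by (auto simp: hom_def Pi_iff is_semigroup_def)

text \<open>A one-letter-tagged copy of S, used as the test semigroup that detects
  idempotence of \<epsilon>; its carrier lives in the type over which cosemigroup
  quantifies.\<close>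

definition tagged_copy :: "'a monoid \<Rightarrow> (nat \<times> 'a) list monoid" where
  "tagged_copy S = \<lparr>carrier = (\<lambda>a. [(0, a)]) ` carrier S,
                    mult = (\<lambda>u v. [(0, snd (hd u) \<otimes>\<^bsub>S\<^esub> snd (hd v))]), one = undefined\<rparr>"

lemma tagged_copy_semigroup: "is_semigroup S \<Longrightarrow> is_semigroup (tagged_copy S)"
  by (auto simp: is_semigroup_def tagged_copy_def)

lemma tagged_copy_tag_hom: "(\<lambda>a. [(0, a)]) \<in> hom S (tagged_copy S)"
  by (auto simp: hom_def tagged_copy_def)

text \<open>Coassociativity of a single-letter co-operation forces \<epsilon> to be idempotent:
  with g the tagging map, (g \<cdot> g) \<cdot> g = g \<circ> \<epsilon> \<circ> \<epsilon> and g \<cdot> (g \<cdot> g) = g \<circ> \<epsilon>.\<close>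

lemma coassociative_single_letter_idempotent:
  assumes cos: "cosemigroup S \<beta>"
    and single: "\<forall>y\<in>carrier S. \<beta> y = [(False, \<epsilon> y)] \<and> \<epsilon> y \<in> carrier S"
    and x: "x \<in> carrier S"
  shows "\<epsilon> (\<epsilon> x) = \<epsilon> x"
proof -
  define A where "A = tagged_copy S"
  define g :: "'a \<Rightarrow> (nat \<times> 'a) list" where "g = (\<lambda>a. [(0, a)])"
  have "is_semigroup A"
    using cos unfolding cosemigroup_def A_def by (blast intro: tagged_copy_semigroup)
  moreover have "g \<in> hom S A"
    unfolding A_def g_def by (rule tagged_copy_tag_hom)
  ultimately have "hmul A \<beta> (hmul A \<beta> g g) g x = hmul A \<beta> g (hmul A \<beta> g g) x"
    using cos x unfolding cosemigroup_def by blast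
  moreover have "hmul A \<beta> (hmul A \<beta> g g) g x = g (\<epsilon> (\<epsilon> x))"
    using single x by (simp add: hmul_single_letter)
  moreover have "hmul A \<beta> g (hmul A \<beta> g g) x = g (\<epsilon> x)"
    using single x by (simp add: hmul_single_letter)
  ultimately show ?thesis by (simp add: g_def)
qed

text \<open>Conversely, an idempotent endomorphism \<epsilon> of a semigroup B yields the
  cosemigroup b \<mapsto> \<epsilon>(b)^(0): both bracketings of a triple product equal g \<circ> \<epsilon>.\<close>

lemma idempotent_endomorphism_cosemigroup:
  assumes "is_semigroup B" "\<epsilon> \<in> hom B B" "\<forall>b\<in>carrier B. \<epsilon> (\<epsilon> b) = \<epsilon> b"
  shows "cosemigroup B (\<lambda>b. [(False, \<epsilon> b)])"
  using assms by (simp add: cosemigroup_def copy0_hom_iff hmul_copy0)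

text \<open>Two co-operations on the same semigroup that agree on its carrier are
  isomorphic via the identity, since copairing letter maps fixes reduced words.\<close>

lemma agreeing_cooperations_iso:
  assumes beta: "\<beta> \<in> hom S (fp S)" and agree: "\<forall>x\<in>carrier S. \<beta>' x = \<beta> x"
  shows "cosg_iso S \<beta> S \<beta>'"
proof -
  have fix_words: "fp_eval (fp S :: (bool \<times> 'a) list monoid) (\<lambda>i a. [(i, id a)]) (\<beta> x) = \<beta> x"
    if "x \<in> carrier S" for x
  proof -
    have "\<beta> x \<in> fp_carrier S" using beta that by (auto simp: hom_def fp_def)
    then have "fp_eval (fp S :: (bool \<times> 'a) list monoid) (\<lambda>i a. [(i, id a)]) (\<beta> x)
        = map (\<lambda>(i, a). (i, id a)) (\<beta> x)"
      using fp_carrier_alternating by (blast intro: fp_eval_letterwise)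
    also have "\<dots> = \<beta> x" by (simp add: case_prod_unfold)
    finally show ?thesis .
  qed
  have "id \<in> hom S S" by (auto simp: hom_def)
  then have "cosg_morph S \<beta> S \<beta>' id" "cosg_morph S \<beta>' S \<beta> id"
    using fix_words agree by (simp_all add: cosg_morph_def)
  then show ?thesis unfolding cosg_iso_def by (intro exI[of _ id]) auto
qed

theorem proposition11p7:
  fixes S :: "'a monoid" and \<beta> :: "'a \<Rightarrow> (bool \<times> 'a) list"
  assumes "cosemigroup S \<beta>"
    and "\<exists>f. cosg_morph S \<beta> R_sgp R_beta f \<and> (\<forall>x\<in>carrier S. f x = R_class [X00])"
  shows "\<exists>(B :: 'a monoid) \<epsilon>. is_semigroup B \<and> \<epsilon> \<in> hom B B \<and> (\<forall>b\<in>carrier B. \<epsilon> (\<epsilon> b) = \<epsilon> b) \<and>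
           cosemigroup B (\<lambda>b. [(False, \<epsilon> b)]) \<and>
           cosg_iso S \<beta> B (\<lambda>b. [(False, \<epsilon> b)]) \<and>
           (\<forall>A :: ('c, 'd) monoid_scheme. is_semigroup A \<longrightarrow>
              (\<forall>h\<in>hom B A. \<forall>h'\<in>hom B A. \<forall>b\<in>carrier B.
                 hmul A (\<lambda>b. [(False, \<epsilon> b)]) h h' b = h (\<epsilon> b)))"
proof -
  have semigroup: "is_semigroup S" and beta: "\<beta> \<in> hom S (fp S)"
    using assms(1) by (auto simp: cosemigroup_def)
  obtain f where f: "cosg_morph S \<beta> R_sgp R_beta f" "\<forall>x\<in>carrier S. f x = R_class [X00]"
    using assms(2) by blast
  define \<epsilon> where "\<epsilon> x = snd (hd (\<beta> x))" for x
  have single: "\<forall>x\<in>carrier S. \<beta> x = [(False, \<epsilon> x)] \<and> \<epsilon> x \<in> carrier S"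
  proof
    fix x assume "x \<in> carrier S"
    then obtain a where "a \<in> carrier S" "\<beta> x = [(False, a)]"
      using single_letter_over_X00[OF beta f] by blast
    then show "\<beta> x = [(False, \<epsilon> x)] \<and> \<epsilon> x \<in> carrier S" by (simp add: \<epsilon>_def)
  qed
  then have agree: "\<forall>x\<in>carrier S. [(False, \<epsilon> x)] = \<beta> x" by simp
  have "(\<lambda>b. [(False, \<epsilon> b)]) \<in> hom S (fp S)"
    by (rule hom_agree[OF semigroup beta]) (simp add: agree)
  then have endo: "\<epsilon> \<in> hom S S" by (simp add: copy0_hom_iff)
  have idem: "\<forall>x\<in>carrier S. \<epsilon> (\<epsilon> x) = \<epsilon> x"
    using coassociative_single_letter_idempotent[OF assms(1) single] by blast
  have "cosemigroup S (\<lambda>b. [(False, \<epsilon> b)])"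
    using idempotent_endomorphism_cosemigroup[OF semigroup endo idem] .
  moreover have "cosg_iso S \<beta> S (\<lambda>b. [(False, \<epsilon> b)])"
    by (rule agreeing_cooperations_iso[OF beta]) (simp add: agree)
  ultimately show ?thesis
    using semigroup endo idem by (intro exI[of _ S] exI[of _ \<epsilon>]) (simp add: hmul_copy0)
qed

end
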